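(* Let $q$ be a prime power and $\mathcal{L}$ a non-empty set of lines of $\mathrm{PG}(n,q)$ satisfying (Pt), (Pl), (Sd) and (To) (see context). Let $M$ be a subspace of $\mathrm{PG}(n,q)$ and $\ell\in\mathcal{L}\setminus\mathcal{L}_M$. Let $$\mathcal{S}=\{\ell^M\in\mathcal{L}_M : \mathcal{L}_{\langle \ell^M,\ell\rangle}\cap\mathcal{L}_M=\{\ell^M\}\text{ and }\ell^M\cap\ell=\emptyset\}.$$ If $\ell^M_1\in\mathcal{S}$, then $\mathcal{L}_{\langle \ell^M_1,\ell\rangle}$ contains at least $q$ lines not in $\bigcup_{\ell^M_2\in\mathcal{S}\setminus\{\ell^M_1\}}\mathcal{L}_{\langle \ell^M_2,\ell\rangle}$.
   Context: (Pt): every point of $\mathrm{PG}(n,q)$ lies on $0$ or $q+1$ lines of $\mathcal{L}$. (Pl): every plane contains $0$, $1$ or $q+1$ lines of $\mathcal{L}$. (Sd): every solid ($3$-dimensional subspace) contains $0$, $1$, $q+1$ or $2q+1$ lines of $\mathcal{L}$. (To): $|\mathcal{L}|\le q^5+q^4+q^3+q^2+q+1$. For a subspace $W$, $\mathcal{L}_W$ denotes the set of lines of $\mathcal{L}$ contained in $W$; $\langle X,Y\rangle$ denotes the subspace spanned by $X$ and $Y$. *)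

theory Defs
  imports "HOL-Analysis.Analysis"
begin

text \<open>PG(n,q) is modelled as the lattice of (vector) subspaces of 'a^'n, where 'a is a
finite field of order q and CARD('n) = n+1. A projective subspace of projective
dimension k is a vector subspace of dimension k+1.\<close>

definition pg_sub :: "('a::{field,finite}^'n) set \<Rightarrow> bool" where
  "pg_sub W \<longleftrightarrow> vec.subspace W"

definition pg_dim_sub :: "nat \<Rightarrow> ('a::{field,finite}^'n) set \<Rightarrow> bool" where
  "pg_dim_sub k W \<longleftrightarrow> vec.subspace W \<and> vec.dim W = k + 1"

abbreviation "pg_point \<equiv> pg_dim_sub 0"
abbreviation "pg_line \<equiv> pg_dim_sub 1"
abbreviation "pg_plane \<equiv> pg_dim_sub 2"
abbreviation "pg_solid \<equiv> pg_dim_sub 3"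

definition lines_in :: "('a::{field,finite}^'n) set set \<Rightarrow> ('a^'n) set \<Rightarrow> ('a^'n) set set" where
  "lines_in L W = {l \<in> L. l \<subseteq> W}"

definition join :: "('a::{field,finite}^'n) set \<Rightarrow> ('a^'n) set \<Rightarrow> ('a^'n) set" where
  "join X Y = vec.span (X \<union> Y)"

text \<open>Projective disjointness: the vector subspaces meet only in 0.\<close>
definition pg_disjoint :: "('a::{field,finite}^'n) set \<Rightarrow> ('a^'n) set \<Rightarrow> bool" where
  "pg_disjoint X Y \<longleftrightarrow> X \<inter> Y \<subseteq> {0}"

definition prop_Pt :: "('a::{field,finite}^'n) set set \<Rightarrow> bool" where
  "prop_Pt L \<longleftrightarrow> (\<forall>P. pg_point P \<longrightarrow>
     card {l \<in> L. P \<subseteq> l} \<in> {0, CARD('a) + 1})"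

definition prop_Pl :: "('a::{field,finite}^'n) set set \<Rightarrow> bool" where
  "prop_Pl L \<longleftrightarrow> (\<forall>\<pi>. pg_plane \<pi> \<longrightarrow>
     card (lines_in L \<pi>) \<in> {0, 1, CARD('a) + 1})"

definition prop_Sd :: "('a::{field,finite}^'n) set set \<Rightarrow> bool" where
  "prop_Sd L \<longleftrightarrow> (\<forall>S. pg_solid S \<longrightarrow>
     card (lines_in L S) \<in> {0, 1, CARD('a) + 1, 2 * CARD('a) + 1})"

definition prop_To :: "('a::{field,finite}^'n) set set \<Rightarrow> bool" where
  "prop_To L \<longleftrightarrow> (let q = CARD('a) in card L \<le> q^5 + q^4 + q^3 + q^2 + q + 1)"

definition setS :: "('a::{field,finite}^'n) set set \<Rightarrow> ('a^'n) set \<Rightarrow> ('a^'n) set \<Rightarrow> ('a^'n) set set" where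
  "setS L M l0 = {m \<in> lines_in L M.
       lines_in L (join m l0) \<inter> lines_in L M = {m} \<and> pg_disjoint m l0}"

end

theory Submission
  imports Defs
begin

text \<open>The solid \<open>S = \<langle>m\<^sub>1,l\<^sub>0\<rangle>\<close> contains at least the two lines \<open>m\<^sub>1, l\<^sub>0\<close> of \<open>\<L>\<close>, hence
\<open>q + 1\<close> or \<open>2q + 1\<close> of them by (Sd). For every other \<open>m\<^sub>2 \<in> \<S>\<close>, the lines removed from \<open>S\<close> are
those in \<open>S \<inter> \<langle>m\<^sub>2,l\<^sub>0\<rangle>\<close>, a subspace through \<open>l\<^sub>0\<close> missing \<open>m\<^sub>1\<close>, so at most a plane; by (Pl) it
contains only \<open>l\<^sub>0\<close> or is a plane with \<open>q + 1\<close> lines. Two different such planes share only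
\<open>l\<^sub>0\<close>, so together with \<open>m\<^sub>1\<close> they would give \<open>2q + 2\<close> lines in \<open>S\<close>. Hence at most one plane
of \<open>q + 1\<close> lines is removed, and then \<open>S\<close> has \<open>2q + 1\<close> lines; either way \<open>q\<close> lines remain.\<close>

lemma card_Diff_UN_pencil_ge:
  fixes X :: "'b set" and f :: "'i \<Rightarrow> 'b set" and q :: nat
  assumes X: "finite X" "card X \<in> {0, 1, q + 1, 2 * q + 1}"
    and l: "l \<in> X" and m: "m \<in> X" "m \<noteq> l" "m \<notin> (\<Union>i\<in>I. f i)"
    and f_sub: "\<And>i. i \<in> I \<Longrightarrow> f i \<subseteq> X \<and> l \<in> f i"
    and f_card: "\<And>i. i \<in> I \<Longrightarrow> f i = {l} \<or> card (f i) = q + 1"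
    and f_Int: "\<And>i j. i \<in> I \<Longrightarrow> j \<in> I \<Longrightarrow> f i \<noteq> f j \<Longrightarrow> f i \<inter> f j \<subseteq> {l}"
  shows "q \<le> card (X - (\<Union>i\<in>I. f i))"
proof -
  have f_fin: "finite (f i)" if "i \<in> I" for i
    using f_sub[OF that] X(1) finite_subset by blast
  have "card {l, m} \<le> card X"
    using X(1) l m(1) by (intro card_mono) auto
  with m(2) X(2) have X_ge: "q + 1 \<le> card X"
    by auto
  show ?thesis
  proof (cases "\<exists>i\<in>I. card (f i) = q + 1")
    case False
    with f_card have "(\<Union>i\<in>I. f i) \<subseteq> {l}"
      by fastforce
    then have "card (X - {l}) \<le> card (X - (\<Union>i\<in>I. f i))"
      using X(1) by (intro card_mono) auto
    with X(1) l X_ge show ?thesis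
      by simp
  next
    case True
    then obtain i where i: "i \<in> I" "card (f i) = q + 1"
      by blast
    have "card (insert m (f i)) \<le> card X"
      using i f_sub m X(1) by (intro card_mono) auto
    with i f_fin m(3) have "q + 2 \<le> card X"
      by auto
    with X(2) have X_card: "card X = 2 * q + 1"
      by auto
    have "f j \<subseteq> f i" if j: "j \<in> I" for j
    proof (rule ccontr)
      assume "\<not> f j \<subseteq> f i"
      with f_card[OF j] f_sub[OF i(1)] have "card (f j) = q + 1" "f i \<noteq> f j"
        by auto
      have "f i \<inter> f j = {l}"
        using f_Int[OF i(1) j \<open>f i \<noteq> f j\<close>] f_sub i(1) j by auto
      then have "card (f i \<union> f j) = 2 * q + 1"
        using card_Un_Int[OF f_fin[OF i(1)] f_fin[OF j]] i(2) \<open>card (f j) = q + 1\<close> by simp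
      moreover have "card (insert m (f i \<union> f j)) \<le> card X"
        using i(1) j f_sub m X(1) by (intro card_mono) auto
      ultimately show False
        using f_fin i(1) j m(3) X_card by auto
    qed
    then have "card (X - f i) \<le> card (X - (\<Union>j\<in>I. f j))"
      using X(1) by (intro card_mono) auto
    moreover have "card (X - f i) = q"
      using card_Diff_subset[OF f_fin[OF i(1)]] f_sub[OF i(1)] i(2) X_card by simp
    ultimately show ?thesis
      by simp
  qed
qed

lemma finite_lines_in: "finite (lines_in (L::('a::{field,finite}^'n) set set) W)"
  by (rule finite_subset[of _ UNIV]) simp_all

lemma subspace_join: "vec.subspace (join X Y)"
  unfolding join_def by (rule vec.subspace_span)

lemma join_upper1: "X \<subseteq> join X Y"
  unfolding join_def using vec.span_superset by blast

lemma join_upper2: "Y \<subseteq> join X Y"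
  unfolding join_def using vec.span_superset by blast

lemma dim_join_disjoint:
  fixes A B :: "('a::{field,finite}^'n) set"
  assumes "vec.subspace A" "vec.subspace B" "pg_disjoint A B"
  shows "vec.dim (join A B) = vec.dim A + vec.dim B"
proof -
  have "A \<inter> B = {0}"
    using assms vec.subspace_0 by (auto simp: pg_disjoint_def)
  moreover have "join A B = {x + y | x y. x \<in> A \<and> y \<in> B}"
    unfolding join_def vec.span_Un using assms(1,2) vec.span_eq_iff by metis
  ultimately show ?thesis
    using vec.dim_sums_Int[OF assms(1,2)] by simp
qed

lemma pg_solid_join_disjoint_lines:
  assumes "pg_line a" "pg_line b" "pg_disjoint a b"
  shows "pg_solid (join a b)"
  using assms dim_join_disjoint[of a b] subspace_join by (auto simp: pg_dim_sub_def)

lemma dim_Int_less: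
  fixes S T :: "('a::{field,finite}^'n) set"
  assumes "vec.subspace S" "vec.subspace T" "\<not> S \<subseteq> T"
  shows "vec.dim (S \<inter> T) < vec.dim S"
proof (rule vec.dim_psubset)
  have "vec.span (S \<inter> T) = S \<inter> T" "vec.span S = S"
    using assms(1,2) vec.subspace_inter by (simp_all add: vec.span_eq_iff)
  with assms(3) show "vec.span (S \<inter> T) \<subset> vec.span S"
    by (simp only:) blast
qed

lemma pg_line_eq_subspace:
  fixes l P :: "('a::{field,finite}^'n) set"
  assumes "pg_line l" "vec.subspace P" "l \<subseteq> P" "vec.dim P \<le> 2"
  shows "l = P"
  using vec.subspace_dim_equal[of l P] assms by (auto simp: pg_dim_sub_def)

lemma lines_in_through_line_cases:
  fixes L :: "('a::{field,finite}^'n) set set" and P l0 :: "('a^'n) set"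
  assumes Pl: "prop_Pl L" and lines: "\<forall>l\<in>L. pg_line l" and l0: "l0 \<in> L"
    and P: "vec.subspace P" "l0 \<subseteq> P" "vec.dim P \<le> 3"
  shows "lines_in L P = {l0} \<or> pg_plane P \<and> card (lines_in L P) = CARD('a) + 1"
proof -
  have l0_line: "pg_line l0"
    using lines l0 by blast
  have l0_in: "l0 \<in> lines_in L P"
    using l0 P(2) by (simp add: lines_in_def)
  have "2 \<le> vec.dim P"
    using vec.dim_subset[OF P(2)] l0_line by (simp add: pg_dim_sub_def)
  with P(3) have "vec.dim P = 2 \<or> vec.dim P = 3"
    by linarith
  then consider "vec.dim P = 2" | "pg_plane P"
    using P(1) by (auto simp: pg_dim_sub_def)
  then show ?thesis
  proof cases
    case 1
    then have "l = P" if "l \<in> lines_in L P" for l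
      using pg_line_eq_subspace[of l P] that lines P(1) by (auto simp: lines_in_def)
    then show ?thesis
      using l0_in by blast
  next
    case 2
    then have "card (lines_in L P) \<in> {0, 1, CARD('a) + 1}"
      using Pl by (simp add: prop_Pl_def)
    moreover have "card (lines_in L P) \<noteq> 0"
      using l0_in finite_lines_in[of L P] by auto
    moreover have "card (lines_in L P) = 1 \<Longrightarrow> lines_in L P = {l0}"
      using l0_in by (auto simp: card_1_singleton_iff)
    ultimately show ?thesis
      using 2 by auto
  qed
qed

lemma pg_planes_common_line_unique:
  fixes P Q l x :: "('a::{field,finite}^'n) set"
  assumes "pg_plane P" "pg_plane Q" "P \<noteq> Q" "pg_line l" "pg_line x"
    and "l \<subseteq> P \<inter> Q" "x \<subseteq> P \<inter> Q"
  shows "x = l"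
proof -
  have PQ: "vec.subspace (P \<inter> Q)"
    using assms(1,2) by (simp add: pg_dim_sub_def vec.subspace_inter)
  have "\<not> P \<subseteq> Q"
    using assms(1-3) vec.subspace_dim_equal[of P Q] by (auto simp: pg_dim_sub_def)
  then have "vec.dim (P \<inter> Q) \<le> 2"
    using dim_Int_less[of P Q] assms(1,2) by (auto simp: pg_dim_sub_def)
  then show ?thesis
    using pg_line_eq_subspace[OF assms(4) PQ] pg_line_eq_subspace[OF assms(5) PQ] assms(6,7)
    by simp
qed

lemma lines_in_through_line_Int:
  fixes L :: "('a::{field,finite}^'n) set set" and P Q l0 :: "('a^'n) set"
  assumes Pl: "prop_Pl L" and lines: "\<forall>l\<in>L. pg_line l" and l0: "l0 \<in> L"
    and P: "vec.subspace P" "l0 \<subseteq> P" "vec.dim P \<le> 3"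
    and Q: "vec.subspace Q" "l0 \<subseteq> Q" "vec.dim Q \<le> 3"
    and ne: "lines_in L P \<noteq> lines_in L Q"
  shows "lines_in L P \<inter> lines_in L Q \<subseteq> {l0}"
proof (cases "lines_in L P = {l0} \<or> lines_in L Q = {l0}")
  case False
  then have "pg_plane P" "pg_plane Q"
    using lines_in_through_line_cases[OF Pl lines l0] P Q by blast+
  moreover have "P \<noteq> Q"
    using ne by blast
  ultimately show ?thesis
    using pg_planes_common_line_unique[of P Q l0] lines l0 P(2) Q(2)
    by (auto simp: lines_in_def)
qed auto

lemma pg_solid_join_setS:
  assumes "\<forall>l\<in>L. pg_line l" "pg_line l0" "m1 \<in> setS L M l0"
  shows "pg_solid (join m1 l0)"
  using assms by (intro pg_solid_join_disjoint_lines) (auto simp: setS_def lines_in_def)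

lemma setS_join_Int:
  assumes lines: "\<forall>l\<in>L. pg_line l" and l0: "pg_line l0"
    and m1: "m1 \<in> setS L M l0" and m: "m \<in> setS L M l0 - {m1}"
  shows "vec.subspace (join m1 l0 \<inter> join m l0)" "l0 \<subseteq> join m1 l0 \<inter> join m l0"
    "vec.dim (join m1 l0 \<inter> join m l0) \<le> 3" "m1 \<notin> lines_in L (join m1 l0 \<inter> join m l0)"
proof -
  have S: "pg_solid (join m1 l0)"
    using lines l0 m1 by (rule pg_solid_join_setS)
  \<comment> \<open>otherwise \<open>m1\<close> would be a second line of \<open>lines_in L M\<close> in \<open>join m l0\<close>\<close>
  have "\<not> m1 \<subseteq> join m l0"
    using m1 m by (auto simp: setS_def lines_in_def)
  then show "m1 \<notin> lines_in L (join m1 l0 \<inter> join m l0)"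
    by (simp add: lines_in_def)
  have "\<not> join m1 l0 \<subseteq> join m l0"
    using \<open>\<not> m1 \<subseteq> join m l0\<close> join_upper1 by blast
  then have "vec.dim (join m1 l0 \<inter> join m l0) < vec.dim (join m1 l0)"
    by (intro dim_Int_less subspace_join)
  with S show "vec.dim (join m1 l0 \<inter> join m l0) \<le> 3"
    by (simp add: pg_dim_sub_def)
  show "vec.subspace (join m1 l0 \<inter> join m l0)"
    by (intro vec.subspace_inter subspace_join)
  show "l0 \<subseteq> join m1 l0 \<inter> join m l0"
    using join_upper2 by blast
qed

theorem lemma6:
  fixes L :: "('a::{field,finite}^'n) set set"
    and M l0 m1 :: "('a^'n) set"
    and n :: nat
  assumes "CARD('n) = n + 1"
    and "\<forall>l\<in>L. pg_line l"
    and "L \<noteq> {}"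
    and "prop_Pt L" "prop_Pl L" "prop_Sd L" "prop_To L"
    and "pg_sub M"
    and "l0 \<in> L - lines_in L M"
    and "m1 \<in> setS L M l0"
  shows "card (lines_in L (join m1 l0)
           - (\<Union>m2\<in>setS L M l0 - {m1}. lines_in L (join m2 l0))) \<ge> CARD('a)"
proof -
  define S where "S = join m1 l0"
  have l0: "l0 \<in> L" "pg_line l0" "\<not> l0 \<subseteq> M"
    using assms(2,9) by (auto simp: lines_in_def)
  have m1: "m1 \<in> L" "m1 \<subseteq> M"
    using assms(10) by (auto simp: setS_def lines_in_def)
  note pencil = setS_join_Int[OF assms(2) l0(2) assms(10), folded S_def]
  have "CARD('a) \<le> card (lines_in L S - (\<Union>m\<in>setS L M l0 - {m1}. lines_in L (S \<inter> join m l0)))"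
  proof (rule card_Diff_UN_pencil_ge)
    have "pg_solid S"
      unfolding S_def using assms(2) l0(2) assms(10) by (rule pg_solid_join_setS)
    with assms(6) show "card (lines_in L S) \<in> {0, 1, CARD('a) + 1, 2 * CARD('a) + 1}"
      unfolding prop_Sd_def by blast
    show "l0 \<in> lines_in L S" "m1 \<in> lines_in L S"
      using l0(1) m1(1) join_upper1[of m1 l0] join_upper2[of l0 m1] by (simp_all add: S_def lines_in_def)
    show "m1 \<noteq> l0"
      using l0(3) m1(2) by blast
    show "m1 \<notin> (\<Union>m\<in>setS L M l0 - {m1}. lines_in L (S \<inter> join m l0))"
      using pencil(4) by blast
    show "lines_in L (S \<inter> join m l0) \<subseteq> lines_in L S \<and> l0 \<in> lines_in L (S \<inter> join m l0)"
      if "m \<in> setS L M l0 - {m1}" for m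
      using pencil(2)[OF that] l0(1) by (auto simp: lines_in_def)
    show "lines_in L (S \<inter> join m l0) = {l0} \<or> card (lines_in L (S \<inter> join m l0)) = CARD('a) + 1"
      if "m \<in> setS L M l0 - {m1}" for m
      using lines_in_through_line_cases[OF assms(5,2) l0(1) pencil(1-3)[OF that]] by auto
    show "lines_in L (S \<inter> join m l0) \<inter> lines_in L (S \<inter> join m' l0) \<subseteq> {l0}"
      if "m \<in> setS L M l0 - {m1}" "m' \<in> setS L M l0 - {m1}"
        "lines_in L (S \<inter> join m l0) \<noteq> lines_in L (S \<inter> join m' l0)" for m m'
      using lines_in_through_line_Int[OF assms(5,2) l0(1) pencil(1-3)[OF that(1)]
          pencil(1-3)[OF that(2)] that(3)] .
  qed (rule finite_lines_in)
  also have "lines_in L S - (\<Union>m\<in>setS L M l0 - {m1}. lines_in L (S \<inter> join m l0))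
      = lines_in L (join m1 l0) - (\<Union>m2\<in>setS L M l0 - {m1}. lines_in L (join m2 l0))"
    by (auto simp: S_def lines_in_def)
  finally show ?thesis .
qed

end
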